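(* Under the setting where $d\ge 1$, $1\le q\le d$, $\mathbf{w}_1,\dots,\mathbf{w}_q$ are independent and uniformly distributed on $S^{d-1}$, $\{\mathbf{u}_1,\dots,\mathbf{u}_q\}$ is their Gram–Schmidt orthonormalization, $\mathbf{g}\in\mathbb{R}^d$ is fixed and nonzero, and $\mathbf{v}_t:=\frac{1}{\sqrt q}\sum_{i=1}^q\operatorname{sign}(\mathbf{g}^\top\mathbf{u}_i)\mathbf{u}_i$, the random vector $$g_2:=\frac{d}{\frac{2}{\pi}(q-1)+1}\,(\mathbf{g}^\top\mathbf{v}_t)\,\mathbf{v}_t$$ satisfies $\mathbb{E}[g_2]=\mathbf{g}$, i.e. it is an unbiased estimator of $\mathbf{g}$.
   Context: $\operatorname{sign}(a)=+1$ if $a>0$, $-1$ if $a<0$. Note $\|\mathbf{v}_t\|=1$ since the $\mathbf{u}_i$ are orthonormal. *)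

theory Defs
  imports "HOL-Probability.Probability"
begin

text \<open>Uniform (normalized surface) probability measure on the unit sphere S^{d-1}
  of a Euclidean space: the radial projection of the uniform distribution on the
  open unit ball (the cone-measure definition of the normalized surface measure).\<close>
definition unif_sphere :: "('a::euclidean_space) measure" where
  "unif_sphere = distr (uniform_measure lborel (ball 0 1)) borel (\<lambda>x. x /\<^sub>R norm x)"

fun gs_list :: "(nat \<Rightarrow> 'a::real_inner) \<Rightarrow> nat \<Rightarrow> 'a list" where
  "gs_list w 0 = []"
| "gs_list w (Suc k) =
     (let us = gs_list w k;
          r = w k - (\<Sum>u\<leftarrow>us. (w k \<bullet> u) *\<^sub>R u)
      in us @ [r /\<^sub>R norm r])"

text \<open>The i-th Gram-Schmidt vector u_i (0-based indexing).\<close>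
definition gram_schmidt :: "(nat \<Rightarrow> 'a::real_inner) \<Rightarrow> nat \<Rightarrow> 'a" where
  "gram_schmidt w i = gs_list w (Suc i) ! i"

definition vt :: "nat \<Rightarrow> 'a::real_inner \<Rightarrow> (nat \<Rightarrow> 'a) \<Rightarrow> 'a" where
  "vt q g w = (1 / sqrt (real q)) *\<^sub>R (\<Sum>i<q. sgn (g \<bullet> gram_schmidt w i) *\<^sub>R gram_schmidt w i)"

definition g2_est :: "nat \<Rightarrow> nat \<Rightarrow> 'a::real_inner \<Rightarrow> (nat \<Rightarrow> 'a) \<Rightarrow> 'a" where
  "g2_est d q g w =
     (real d / ((2 / pi) * (real q - 1) + 1) * (g \<bullet> vt q g w)) *\<^sub>R vt q g w"

end

theory Submission
  imports Defs
begin

(* The law of (w_1, ..., w_q), and with it that of (u_1, ..., u_q), is invariant under every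
  orthogonal map, and g_2 is equivariant. Hence E g_2 is fixed by every orthogonal map fixing g,
  in particular by the reflections in hyperplanes containing g, so E g_2 = mu g for a scalar mu.
  To find mu, note that g . g_2 = d / (q c) (sum_i |g . u_i|)^2 with c = (2/pi)(q - 1) + 1, and
  that the u_i are almost surely orthonormal. By rotation invariance E |g . u_i|^2 = |g|^2 / d,
  and E |g . u_i| |g . u_j| = 2 |g|^2 / (pi d) for i ~= j; the latter follows by averaging
  |z . u| |z . v| over the rotations of the (u, v)-plane. Summing up, g . E g_2 = |g|^2, so mu = 1. *)

section \<open>Orthogonal invariance of Lebesgue measure\<close>

lemma borel_measurable_linear:
  fixes f :: "'a::euclidean_space \<Rightarrow> 'b::euclidean_space"
  assumes "linear f"
  shows "f \<in> borel_measurable borel"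
  using assms by (intro borel_measurable_continuous_onI linear_continuous_on)
    (simp add: linear_conv_bounded_linear)

lemma borel_measurable_orthogonal_transformation:
  fixes f :: "'a::euclidean_space \<Rightarrow> 'a"
  assumes "orthogonal_transformation f"
  shows "f \<in> borel_measurable borel"
  using assms by (intro borel_measurable_linear orthogonal_transformation_linear)

lemma lborel_distr_orthogonal_transformation_wellorder:
  fixes f :: "real^('m::{finite,wellorder}) \<Rightarrow> real^('m::{finite,wellorder})"
  assumes f: "orthogonal_transformation f"
  shows "distr lborel borel f = lborel"
proof (rule lborel_eqI[symmetric])
  have f_meas: "f \<in> borel_measurable borel"
    using f by (rule borel_measurable_orthogonal_transformation)
  have inv_f: "orthogonal_transformation (inv f)"
    using f by (rule orthogonal_transformation_inv)
  fix l u :: "real^('m::{finite,wellorder})"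
  assume le: "\<And>b. b \<in> Basis \<Longrightarrow> l \<bullet> b \<le> u \<bullet> b"
  have preimage: "f -` box l u = inv f ` box l u"
    using orthogonal_transformation_bij[OF f] by (simp add: bij_vimage_eq_inv_image)
  have box: "box l u \<in> lmeasurable" by simp
  have "emeasure (distr lborel borel f) (box l u) = emeasure lebesgue (f -` box l u)"
    using f_meas by (simp add: emeasure_distr emeasure_completion measurable_sets_borel)
  also have "\<dots> = ennreal (measure lebesgue (inv f ` box l u))"
    unfolding preimage using measurable_orthogonal_image[OF inv_f box]
    by (simp add: emeasure_eq_measure2)
  also have "\<dots> = emeasure lborel (box l u)"
    using measure_orthogonal_image[OF inv_f box] box
    by (simp add: emeasure_eq_measure2 emeasure_completion)
  also have "\<dots> = (\<Prod>b\<in>Basis. (u - l) \<bullet> b)"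
    using le by (simp add: emeasure_lborel_box_eq)
  finally show "emeasure (distr lborel borel f) (box l u) = (\<Prod>b\<in>Basis. (u - l) \<bullet> b)" .
qed simp

(* Change_Of_Vars proves the measure invariance only for index types of class wellorder;
  a copy of an arbitrary finite index type, ordered through to_nat, transfers it. *)
typedef 'a nat_ordered = "UNIV :: 'a set" by auto

lemma bij_Rep_nat_ordered: "bij Rep_nat_ordered"
  by (metis Rep_nat_ordered_inject UNIV_I bij_betw_def inj_on_def
      type_definition.Rep_range type_definition_nat_ordered)

instance nat_ordered :: (finite) finite
proof
  have "(UNIV :: 'a nat_ordered set) = Abs_nat_ordered ` UNIV"
    by (metis Abs_nat_ordered_cases surj_def)
  moreover have "finite (Abs_nat_ordered ` (UNIV :: 'a set))" by simp
  ultimately show "finite (UNIV :: 'a nat_ordered set)" by simp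
qed

instantiation nat_ordered :: (finite) wellorder
begin

definition less_eq_nat_ordered :: "'a nat_ordered \<Rightarrow> 'a nat_ordered \<Rightarrow> bool" where
  "less_eq_nat_ordered x y \<longleftrightarrow> to_nat (Rep_nat_ordered x) \<le> to_nat (Rep_nat_ordered y)"

definition less_nat_ordered :: "'a nat_ordered \<Rightarrow> 'a nat_ordered \<Rightarrow> bool" where
  "less_nat_ordered x y \<longleftrightarrow> to_nat (Rep_nat_ordered x) < to_nat (Rep_nat_ordered y)"

instance
proof
  fix x y z :: "'a nat_ordered"
  show "x < y \<longleftrightarrow> x \<le> y \<and> \<not> y \<le> x"
    by (auto simp: less_eq_nat_ordered_def less_nat_ordered_def)
  show "x \<le> x" by (simp add: less_eq_nat_ordered_def)
  show "x \<le> y \<Longrightarrow> y \<le> z \<Longrightarrow> x \<le> z" by (simp add: less_eq_nat_ordered_def)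
  show "x \<le> y \<Longrightarrow> y \<le> x \<Longrightarrow> x = y"
    by (metis less_eq_nat_ordered_def Rep_nat_ordered_inject inj_to_nat injD le_antisym)
  show "x \<le> y \<or> y \<le> x" by (auto simp: less_eq_nat_ordered_def)
next
  fix P :: "'a nat_ordered \<Rightarrow> bool" and a :: "'a nat_ordered"
  assume step: "\<And>x. (\<And>y. y < x \<Longrightarrow> P y) \<Longrightarrow> P x"
  show "P a"
  proof (induction "to_nat (Rep_nat_ordered a)" arbitrary: a rule: less_induct)
    case less
    then show ?case by (rule step) (simp add: less_nat_ordered_def)
  qed
qed

end

definition rank_vec :: "real^'n \<Rightarrow> real^'n nat_ordered" where
  "rank_vec x = (\<chi> j. x $ Rep_nat_ordered j)"

definition unrank_vec :: "real^'n nat_ordered \<Rightarrow> real^'n" where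
  "unrank_vec y = (\<chi> i. y $ Abs_nat_ordered i)"

lemma unrank_rank_vec [simp]: "unrank_vec (rank_vec x) = x"
  by (simp add: unrank_vec_def rank_vec_def Abs_nat_ordered_inverse vec_eq_iff)

lemma rank_unrank_vec [simp]: "rank_vec (unrank_vec y) = y"
  by (simp add: unrank_vec_def rank_vec_def Rep_nat_ordered_inverse vec_eq_iff)

lemma linear_rank_vec: "linear rank_vec"
  by (rule linearI) (simp_all add: rank_vec_def vec_eq_iff)

lemma linear_unrank_vec: "linear unrank_vec"
  by (rule linearI) (simp_all add: unrank_vec_def vec_eq_iff)

lemma inner_rank_vec: "rank_vec x \<bullet> rank_vec y = x \<bullet> y"
  unfolding rank_vec_def inner_vec_def
  using sum.reindex_bij_betw[OF bij_Rep_nat_ordered, of "\<lambda>i. x $ i * y $ i"] by simp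

lemma inner_unrank_vec: "unrank_vec x \<bullet> unrank_vec y = x \<bullet> y"
  by (metis inner_rank_vec rank_unrank_vec)

lemma prod_Basis_vec: "(\<Prod>b\<in>Basis. (x::real^'n) \<bullet> b) = (\<Prod>i\<in>UNIV. x $ i)"
proof -
  have Basis: "(Basis :: (real^'n) set) = (\<lambda>i. axis i 1) ` UNIV"
    by (auto simp: Basis_vec_def)
  have "inj (\<lambda>i::'n. axis i (1::real))"
    by (auto simp: inj_on_def axis_eq_axis)
  then show ?thesis unfolding Basis by (simp add: prod.reindex inner_axis)
qed

lemma lborel_distr_unrank_vec: "distr lborel borel unrank_vec = (lborel :: (real^'n) measure)"
proof (rule lborel_eqI[symmetric])
  fix l u :: "real^'n"
  assume le: "\<And>b. b \<in> Basis \<Longrightarrow> l \<bullet> b \<le> u \<bullet> b"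
  have preimage: "unrank_vec -` box l u = box (rank_vec l) (rank_vec u)"
  proof -
    have all_Rep: "(\<forall>j. P (Rep_nat_ordered j) j) \<longleftrightarrow> (\<forall>i. P i (Abs_nat_ordered i))" for P
      by (metis Abs_nat_ordered_inverse Rep_nat_ordered_inverse UNIV_I)
    show ?thesis
      using all_Rep[of "\<lambda>i j. l $ i < _ $ j \<and> _ $ j < u $ i"]
      by (auto simp: mem_box_cart rank_vec_def unrank_vec_def)
  qed
  have le_component: "l $ i \<le> u $ i" for i
    using le[of "axis i 1"] by (simp add: inner_axis)
  have le_rank: "rank_vec l \<bullet> b \<le> rank_vec u \<bullet> b" if b: "b \<in> Basis" for b
  proof -
    obtain j where "b = axis j 1" using b by (auto simp: Basis_vec_def)
    then show ?thesis
      using le_component[of "Rep_nat_ordered j"] by (simp add: inner_axis rank_vec_def)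
  qed
  have "emeasure (distr lborel borel unrank_vec) (box l u)
      = emeasure lborel (box (rank_vec l) (rank_vec u))"
    using borel_measurable_linear[OF linear_unrank_vec]
    by (subst emeasure_distr) (simp_all add: preimage)
  also have "\<dots> = (\<Prod>b\<in>Basis. (rank_vec u - rank_vec l) \<bullet> b)"
    using le_rank by (simp add: emeasure_lborel_box_eq)
  also have "\<dots> = (\<Prod>j\<in>UNIV. (u - l) $ Rep_nat_ordered j)"
    by (simp add: prod_Basis_vec rank_vec_def)
  also have "\<dots> = (\<Prod>b\<in>Basis. (u - l) \<bullet> b)"
    using prod.reindex_bij_betw[OF bij_Rep_nat_ordered, of "\<lambda>i. (u - l) $ i"]
    by (simp add: prod_Basis_vec)
  finally show "emeasure (distr lborel borel unrank_vec) (box l u) = (\<Prod>b\<in>Basis. (u - l) \<bullet> b)" .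
qed simp

lemma lborel_distr_orthogonal_transformation:
  fixes f :: "real^'n \<Rightarrow> real^'n"
  assumes f: "orthogonal_transformation f"
  shows "distr lborel borel f = lborel"
proof -
  define f' where "f' = rank_vec \<circ> f \<circ> unrank_vec"
  have f': "orthogonal_transformation f'"
    using f linear_rank_vec linear_unrank_vec
    by (auto intro!: linear_compose simp: orthogonal_transformation_def f'_def
        inner_rank_vec inner_unrank_vec)
  have comm: "f \<circ> unrank_vec = unrank_vec \<circ> f'"
    by (auto simp: f'_def)
  have unrank_meas: "unrank_vec \<in> borel_measurable borel"
    by (rule borel_measurable_linear[OF linear_unrank_vec])
  have "distr lborel borel f = distr (distr lborel borel unrank_vec) borel f"
    by (simp add: lborel_distr_unrank_vec)
  also have "\<dots> = distr lborel borel (unrank_vec \<circ> f')"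
    using f unrank_meas
    by (subst distr_distr) (simp_all add: comm borel_measurable_orthogonal_transformation)
  also have "\<dots> = distr (distr lborel borel f') borel unrank_vec"
    using f' unrank_meas by (subst distr_distr) (simp_all add: borel_measurable_orthogonal_transformation)
  also have "\<dots> = lborel"
    using lborel_distr_orthogonal_transformation_wellorder[OF f'] lborel_distr_unrank_vec by simp
  finally show ?thesis .
qed

section \<open>The uniform distribution on the sphere\<close>

definition uniform_ball :: "'a::euclidean_space measure" where
  "uniform_ball = uniform_measure lborel (ball 0 1)"

lemma unif_sphere_eq_distr_sgn: "unif_sphere = distr uniform_ball borel sgn"
  by (simp add: unif_sphere_def uniform_ball_def sgn_div_norm[abs_def])

lemma sets_uniform_ball [simp, measurable_cong]: "sets uniform_ball = sets borel"
  by (simp add: uniform_ball_def)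

lemma space_uniform_ball [simp]: "space uniform_ball = UNIV"
  by (simp add: uniform_ball_def)

lemma sets_unif_sphere [simp, measurable_cong]: "sets unif_sphere = sets borel"
  by (simp add: unif_sphere_def)

lemma space_unif_sphere [simp]: "space unif_sphere = UNIV"
  by (simp add: unif_sphere_def)

lemma prob_space_uniform_ball: "prob_space (uniform_ball :: 'a::euclidean_space measure)"
proof -
  have "0 < unit_ball_vol (real DIM('a))"
    by (rule unit_ball_vol_pos) simp
  then have "unit_ball_vol (real DIM('a)) \<noteq> 0" by linarith
  then have "emeasure lborel (ball (0::'a) 1) \<noteq> 0"
    by (simp add: emeasure_ball)
  moreover have "emeasure lborel (ball (0::'a) 1) \<noteq> \<infinity>"
    using emeasure_lborel_ball_finite by (metis less_irrefl)
  ultimately show ?thesis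
    unfolding uniform_ball_def by (rule prob_space_uniform_measure)
qed

lemma prob_space_unif_sphere: "prob_space (unif_sphere :: 'a::euclidean_space measure)"
  unfolding unif_sphere_eq_distr_sgn
  by (intro prob_space.prob_space_distr prob_space_uniform_ball) simp

lemma AE_unif_sphere_norm: "AE z in unif_sphere. norm (z::'a::euclidean_space) = 1"
proof -
  have "emeasure uniform_ball {0::'a} = 0"
    unfolding uniform_ball_def by (subst emeasure_uniform_measure) auto
  then have "AE x in (uniform_ball :: 'a measure). x \<noteq> 0"
    by (intro AE_I[of _ _ "{0}"]) (auto simp: uniform_ball_def)
  then have "AE x in (uniform_ball :: 'a measure). norm (sgn x) = 1"
    by eventually_elim (simp add: norm_sgn)
  then show ?thesis
    unfolding unif_sphere_eq_distr_sgn by (subst AE_distr_iff) auto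
qed

lemma integrable_unif_sphere_bounded:
  fixes h :: "'a::euclidean_space \<Rightarrow> 'b::{banach, second_countable_topology}"
  assumes "h \<in> borel_measurable borel" and "\<And>z. norm z = 1 \<Longrightarrow> norm (h z) \<le> B"
  shows "integrable unif_sphere h"
proof (rule finite_measure.integrable_const_bound)
  show "finite_measure unif_sphere"
    using prob_space_unif_sphere by (rule prob_space.finite_measure)
  show "AE z in unif_sphere. norm (h z) \<le> B"
    using AE_unif_sphere_norm by eventually_elim (rule assms(2))
qed (use assms(1) in \<open>simp cong: measurable_cong_sets\<close>)

lemma distr_uniform_ball_orthogonal_transformation:
  fixes f :: "real^'n \<Rightarrow> real^'n"
  assumes f: "orthogonal_transformation f"
  shows "distr uniform_ball borel f = uniform_ball"
proof (rule measure_eqI)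
  show "sets (distr uniform_ball borel f) = sets uniform_ball" by simp
  have f_meas: "f \<in> borel_measurable borel"
    using f by (rule borel_measurable_orthogonal_transformation)
  have ball: "f -` ball 0 1 = ball 0 1"
    using orthogonal_transformation_norm[OF f] by auto
  fix A :: "(real^'n) set"
  assume "A \<in> sets (distr uniform_ball borel f)"
  then have A: "A \<in> sets borel" by simp
  have "emeasure (distr uniform_ball borel f) A
      = emeasure lborel (ball 0 1 \<inter> f -` A) / emeasure lborel (ball (0::real^'n) 1)"
    using f_meas A unfolding uniform_ball_def
    by (simp add: emeasure_distr emeasure_uniform_measure measurable_sets_borel)
  also have "emeasure lborel (ball 0 1 \<inter> f -` A) = emeasure (distr lborel borel f) (ball 0 1 \<inter> A)"
    using f_meas A by (subst emeasure_distr) (auto simp: vimage_Int ball)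
  also have "\<dots> = emeasure lborel (ball 0 1 \<inter> A)"
    by (simp add: lborel_distr_orthogonal_transformation[OF f])
  also have "\<dots> / emeasure lborel (ball (0::real^'n) 1) = emeasure uniform_ball A"
    unfolding uniform_ball_def using A by (subst emeasure_uniform_measure) auto
  finally show "emeasure (distr uniform_ball borel f) A = emeasure uniform_ball A" .
qed

lemma distr_unif_sphere_orthogonal_transformation:
  fixes f :: "real^'n \<Rightarrow> real^'n"
  assumes f: "orthogonal_transformation f"
  shows "distr unif_sphere borel f = unif_sphere"
proof -
  have f_meas: "f \<in> borel_measurable borel"
    using f by (rule borel_measurable_orthogonal_transformation)
  have "f \<circ> sgn = sgn \<circ> f"
    by (auto simp: sgn_div_norm orthogonal_transformation_norm[OF f]
        orthogonal_transformation_scaleR[OF f])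
  then have "distr (distr uniform_ball borel sgn) borel f = distr (distr uniform_ball borel f) borel sgn"
    using f_meas by (simp add: distr_distr cong: measurable_cong_sets)
  then show ?thesis
    by (simp add: unif_sphere_eq_distr_sgn distr_uniform_ball_orthogonal_transformation[OF f])
qed

lemma integral_unif_sphere_orthogonal_transformation:
  fixes f :: "real^'n \<Rightarrow> real^'n" and h :: "real^'n \<Rightarrow> real"
  assumes f: "orthogonal_transformation f" and h: "h \<in> borel_measurable borel"
  shows "(\<integral>z. h (f z) \<partial>unif_sphere) = (\<integral>z. h z \<partial>unif_sphere)"
proof -
  have "f \<in> unif_sphere \<rightarrow>\<^sub>M borel"
    using borel_measurable_orthogonal_transformation[OF f] by (simp cong: measurable_cong_sets)
  then have "(\<integral>z. h z \<partial>distr unif_sphere borel f) = (\<integral>z. h (f z) \<partial>unif_sphere)"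
    using h by (rule integral_distr)
  then show ?thesis by (simp add: distr_unif_sphere_orthogonal_transformation[OF f])
qed

lemma emeasure_unif_sphere_lowdim_subspace:
  fixes A V :: "'a::euclidean_space set"
  assumes A: "A \<in> sets borel" and "A \<subseteq> V" and V: "subspace V" and "dim V < DIM('a)"
  shows "emeasure unif_sphere A = 0"
proof -
  have "ball 0 1 \<inter> sgn -` A \<subseteq> V"
  proof
    fix x assume "x \<in> ball 0 1 \<inter> sgn -` A"
    then have "sgn x \<in> V"
      using \<open>A \<subseteq> V\<close> by auto
    then have "norm x *\<^sub>R sgn x \<in> V"
      using V by (intro subspace_mul)
    then show "x \<in> V"
      using V by (cases "x = 0") (simp_all add: sgn_div_norm subspace_0)
  qed
  then have "negligible (ball 0 1 \<inter> sgn -` A)"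
    by (rule negligible_subset[OF negligible_lowdim[OF \<open>dim V < DIM('a)\<close>]])
  then have "emeasure lebesgue (ball 0 1 \<inter> sgn -` A) = 0"
    unfolding negligible_iff_null_sets by auto
  moreover have "ball 0 1 \<inter> sgn -` A \<in> sets lborel"
    using A by (auto intro!: measurable_sets_borel[OF borel_measurable_sgn])
  ultimately have "emeasure lborel (ball 0 1 \<inter> sgn -` A) = 0"
    by (simp add: emeasure_completion)
  then have "emeasure uniform_ball (sgn -` A) = 0"
    unfolding uniform_ball_def using A
    by (subst emeasure_uniform_measure) (auto intro!: measurable_sets_borel[OF borel_measurable_sgn])
  then show ?thesis
    unfolding unif_sphere_eq_distr_sgn using A by (subst emeasure_distr) auto
qed

lemma integral_unif_sphere_inner_square:
  fixes u :: "real^'n"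
  assumes u: "norm u = 1"
  shows "(\<integral>z. (z \<bullet> u)\<^sup>2 \<partial>unif_sphere) = 1 / real CARD('n)"
proof -
  interpret prob_space "unif_sphere :: (real^'n) measure"
    by (rule prob_space_unif_sphere)
  define J where "J w = (\<integral>z. (z \<bullet> w)\<^sup>2 \<partial>(unif_sphere :: (real^'n) measure))" for w :: "real^'n"
  have J_eq: "J w = J u" if w: "norm w = 1" for w
  proof -
    obtain f where f: "orthogonal_transformation f" and "f u = w"
      using orthogonal_transformation_exists_1[OF u w] by blast
    then have "f z \<bullet> w = z \<bullet> u" for z
      by (metis orthogonal_transformation_def)
    moreover have "J w = (\<integral>z. (f z \<bullet> w)\<^sup>2 \<partial>unif_sphere)"
      unfolding J_def by (rule integral_unif_sphere_orthogonal_transformation[OF f, symmetric]) simp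
    ultimately show ?thesis
      by (simp add: J_def)
  qed
  have integrable_square: "integrable unif_sphere (\<lambda>z. (z \<bullet> w)\<^sup>2)" for w :: "real^'n"
  proof (rule integrable_unif_sphere_bounded[where B="(norm w)\<^sup>2"])
    fix z :: "real^'n" assume "norm z = 1"
    then have "\<bar>z \<bullet> w\<bar> \<le> norm w" using Cauchy_Schwarz_ineq2[of z w] by simp
    then have "\<bar>z \<bullet> w\<bar>\<^sup>2 \<le> (norm w)\<^sup>2" by (intro power_mono) auto
    then show "norm ((z \<bullet> w)\<^sup>2) \<le> (norm w)\<^sup>2" by simp
  qed simp
  have "(\<Sum>i\<in>UNIV. J (axis i 1))
      = (\<integral>z. (\<Sum>i\<in>UNIV. (z \<bullet> axis i 1)\<^sup>2) \<partial>(unif_sphere :: (real^'n) measure))"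
    unfolding J_def by (subst Bochner_Integration.integral_sum) (simp_all add: integrable_square)
  also have "\<dots> = (\<integral>z. 1 \<partial>(unif_sphere :: (real^'n) measure))"
  proof (rule integral_cong_AE)
    show "AE z in (unif_sphere :: (real^'n) measure). (\<Sum>i\<in>UNIV. (z \<bullet> axis i 1)\<^sup>2) = 1"
      using AE_unif_sphere_norm
    proof eventually_elim
      fix z :: "real^'n" assume "norm z = 1"
      then have "(\<Sum>i\<in>UNIV. z $ i * z $ i) = 1"
        by (simp add: norm_eq_1 inner_vec_def)
      then show "(\<Sum>i\<in>UNIV. (z \<bullet> axis i 1)\<^sup>2) = 1"
        by (simp add: inner_axis power2_eq_square)
    qed
  qed simp_all
  also have "\<dots> = 1" using prob_space by simp
  finally have "(\<Sum>i\<in>UNIV. J (axis i 1)) = 1" .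
  moreover have "(\<Sum>i\<in>UNIV. J (axis i 1)) = real CARD('n) * J u"
    by (simp add: J_eq)
  ultimately show ?thesis
    unfolding J_def by (simp add: field_simps)
qed

definition abs_sin_integral :: "real \<Rightarrow> real" where
  "abs_sin_integral x = (LBINT t=ereal 0..ereal x. \<bar>sin t\<bar>)"

lemma has_real_derivative_abs_sin_integral: "(abs_sin_integral has_real_derivative \<bar>sin x\<bar>) (at x)"
proof -
  have "(at x within {min 0 (x - 1)..max 0 (x + 1)}) = at x"
    by (intro at_within_interior) auto
  moreover have "continuous_on {min 0 (x - 1)..max 0 (x + 1)} (\<lambda>t. \<bar>sin t\<bar>)"
    by (intro continuous_intros)
  ultimately show ?thesis
    using interval_integral_FTC2[of "min 0 (x - 1)" 0 "max 0 (x + 1)" "\<lambda>t. \<bar>sin t\<bar>" x]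
    by (auto simp: abs_sin_integral_def[abs_def] zero_ereal_def
        has_real_derivative_iff_has_vector_derivative split del: if_split)
qed

lemma abs_sin_integral_pi: "abs_sin_integral pi = 2"
proof -
  have "(LBINT t=ereal 0..ereal pi. \<bar>sin t\<bar>) = (- cos pi) - (- cos 0)"
  proof (rule interval_integral_FTC_finite)
    show "continuous_on {min 0 pi..max 0 pi} (\<lambda>t. \<bar>sin t\<bar>)"
      by (intro continuous_intros)
    fix x assume "min 0 pi \<le> x" "x \<le> max 0 pi"
    then have "\<bar>sin x\<bar> = sin x"
      by (simp add: sin_ge_zero)
    then show "((\<lambda>t. - cos t) has_vector_derivative \<bar>sin x\<bar>) (at x within {min 0 pi..max 0 pi})"
      by (auto intro!: derivative_eq_intros
          simp: has_real_derivative_iff_has_vector_derivative[symmetric])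
  qed
  then show ?thesis by (simp add: abs_sin_integral_def)
qed

lemma abs_sin_integral_add_pi: "abs_sin_integral (x + pi) = abs_sin_integral x + 2"
proof -
  have "\<exists>c. \<forall>x\<in>UNIV. abs_sin_integral (x + pi) - abs_sin_integral x = c"
  proof (rule has_field_derivative_zero_constant)
    fix x :: real
    have "((\<lambda>x. x + pi) has_real_derivative 1) (at x)"
      by (auto intro!: derivative_eq_intros)
    then have "((\<lambda>x. abs_sin_integral (x + pi) - abs_sin_integral x)
        has_real_derivative (\<bar>sin (x + pi)\<bar> * 1 - \<bar>sin x\<bar>)) (at x)"
      by (intro derivative_intros DERIV_chain2[OF has_real_derivative_abs_sin_integral]
          has_real_derivative_abs_sin_integral)
    then show "((\<lambda>x. abs_sin_integral (x + pi) - abs_sin_integral x) has_real_derivative 0) (at x within UNIV)"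
      by (simp add: sin_add)
  qed simp
  then obtain c where c: "\<And>x. abs_sin_integral (x + pi) - abs_sin_integral x = c"
    by blast
  from c[of 0] have "c = 2"
    by (simp add: abs_sin_integral_def abs_sin_integral_pi[unfolded abs_sin_integral_def])
  with c[of x] show ?thesis by simp
qed

lemma interval_integral_abs_sin_shift: "(LBINT t=0..4*pi. \<bar>sin (t + a)\<bar>) = 8"
proof -
  have "(LBINT t=ereal 0..ereal (4*pi). \<bar>sin (t + a)\<bar>) = abs_sin_integral (4*pi + a) - abs_sin_integral (0 + a)"
  proof (rule interval_integral_FTC_finite)
    show "continuous_on {min 0 (4*pi)..max 0 (4*pi)} (\<lambda>t. \<bar>sin (t + a)\<bar>)"
      by (intro continuous_intros)
    fix x :: real
    have "((\<lambda>x. x + a) has_real_derivative 1) (at x)"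
      by (auto intro!: derivative_eq_intros)
    then have "((\<lambda>t. abs_sin_integral (t + a)) has_real_derivative (\<bar>sin (x + a)\<bar> * 1)) (at x)"
      by (rule DERIV_chain2[OF has_real_derivative_abs_sin_integral])
    then show "((\<lambda>t. abs_sin_integral (t + a)) has_vector_derivative \<bar>sin (x + a)\<bar>)
        (at x within {min 0 (4*pi)..max 0 (4*pi)})"
      by (simp add: has_real_derivative_iff_has_vector_derivative[symmetric] has_field_derivative_at_within)
  qed
  also have "abs_sin_integral (4*pi + a) = abs_sin_integral a + 8"
    using abs_sin_integral_add_pi[of a] abs_sin_integral_add_pi[of "a + pi"]
      abs_sin_integral_add_pi[of "a + 2*pi"] abs_sin_integral_add_pi[of "a + 3*pi"]
    by (simp add: algebra_simps)
  finally show ?thesis by (simp add: zero_ereal_def)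
qed

(* The half angle makes the integrand a multiple of |sin (t + c)|, so no substitution is needed. *)
lemma interval_integral_abs_rotated_product:
  "(LBINT t=0..4*pi. \<bar>(cos (t/2) * a - sin (t/2) * b) * (sin (t/2) * a + cos (t/2) * b)\<bar>)
    = 4 * (a\<^sup>2 + b\<^sup>2)"
proof -
  define r where "r = sqrt (a\<^sup>2 + b\<^sup>2)"
  obtain p where ab: "a = r * cos p" "b = r * sin p"
  proof (cases "r = 0")
    case True
    then show ?thesis using that[of 0] by (simp add: r_def)
  next
    case False
    have "(a / r)\<^sup>2 + (b / r)\<^sup>2 = 1"
      using False by (simp add: r_def power_divide add_divide_distrib[symmetric])
    then obtain p where "a / r = cos p" "b / r = sin p"
      using sincos_total_2pi by metis
    then show ?thesis using that[of p] False by (simp add: field_simps)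
  qed
  have "\<bar>(cos (t/2) * a - sin (t/2) * b) * (sin (t/2) * a + cos (t/2) * b)\<bar>
      = (r\<^sup>2 / 2) * \<bar>sin (t + 2 * p)\<bar>" for t
  proof -
    have "(cos (t/2) * a - sin (t/2) * b) * (sin (t/2) * a + cos (t/2) * b)
        = r\<^sup>2 * (cos (t/2 + p) * sin (t/2 + p))"
      by (simp add: ab cos_add sin_add power2_eq_square algebra_simps)
    also have "\<dots> = (r\<^sup>2 / 2) * sin (t + 2 * p)"
      using sin_double[of "t/2 + p"] by (simp add: algebra_simps)
    finally show ?thesis
      by (simp only: abs_mult) simp
  qed
  then have "(LBINT t=0..4*pi. \<bar>(cos (t/2) * a - sin (t/2) * b) * (sin (t/2) * a + cos (t/2) * b)\<bar>)
      = (LBINT t=0..4*pi. (r\<^sup>2 / 2) * \<bar>sin (t + 2 * p)\<bar>)"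
    by (simp only:)
  also have "\<dots> = (r\<^sup>2 / 2) * (LBINT t=0..4*pi. \<bar>sin (t + 2 * p)\<bar>)"
    by (rule interval_lebesgue_integral_mult_right)
  also have "\<dots> = 4 * r\<^sup>2"
    by (simp add: interval_integral_abs_sin_shift)
  finally show ?thesis by (simp add: r_def)
qed

definition plane_rotation :: "'a::real_inner \<Rightarrow> 'a \<Rightarrow> real \<Rightarrow> 'a \<Rightarrow> 'a" where
  "plane_rotation u v t z = z + (cos t - 1) *\<^sub>R ((z \<bullet> u) *\<^sub>R u + (z \<bullet> v) *\<^sub>R v)
     + sin t *\<^sub>R ((z \<bullet> u) *\<^sub>R v - (z \<bullet> v) *\<^sub>R u)"

context
  fixes u v :: "'a::real_inner"
  assumes uu: "u \<bullet> u = 1" and vv: "v \<bullet> v = 1" and uv: "u \<bullet> v = 0"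
begin

lemma inner_plane_rotation_left:
  "plane_rotation u v t z \<bullet> u = cos t * (z \<bullet> u) - sin t * (z \<bullet> v)"
  "plane_rotation u v t z \<bullet> v = sin t * (z \<bullet> u) + cos t * (z \<bullet> v)"
  using uu vv uv
  by (simp_all add: plane_rotation_def inner_add_left inner_diff_left inner_commute[of v u] algebra_simps)

lemma orthogonal_transformation_plane_rotation:
  "orthogonal_transformation (plane_rotation u v t)"
  unfolding orthogonal_transformation_def
proof (intro conjI allI)
  show "linear (plane_rotation u v t)"
    by (rule linearI)
      (simp_all add: plane_rotation_def inner_add_left scaleR_add_right scaleR_diff_right algebra_simps)
  fix x y :: 'a
  define c where "c = cos t"
  define s where "s = sin t"
  have cs: "s * s = 1 - c * c"
    unfolding c_def s_def using sin_cos_squared_add[of t] by (simp add: power2_eq_square)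
  have vu: "v \<bullet> u = 0"
    using uv by (simp add: inner_commute)
  show "plane_rotation u v t x \<bullet> plane_rotation u v t y = x \<bullet> y"
    unfolding plane_rotation_def c_def[symmetric] s_def[symmetric]
    apply (simp add: inner_add_left inner_add_right inner_diff_left inner_diff_right uu vv uv vu)
    apply (simp add: inner_commute[of u] inner_commute[of v] algebra_simps)
    using cs by algebra
qed

end

(* The rotations of the (u, v)-plane preserve unif_sphere, and the average of |z . u| |z . v|
  over all of them is ((z . u)^2 + (z . v)^2) / pi; Fubini exchanges the two averages. *)
lemma integral_unif_sphere_abs_inner_mult:
  fixes u v :: "real^'n"
  assumes uu: "u \<bullet> u = 1" and vv: "v \<bullet> v = 1" and uv: "u \<bullet> v = 0"
  shows "(\<integral>z. \<bar>z \<bullet> u\<bar> * \<bar>z \<bullet> v\<bar> \<partial>unif_sphere) = 2 / (pi * real CARD('n))"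
proof -
  interpret S: prob_space "unif_sphere :: (real^'n) measure"
    by (rule prob_space_unif_sphere)
  interpret pair_sigma_finite "unif_sphere :: (real^'n) measure" lborel
    by (simp add: pair_sigma_finite_def S.sigma_finite_measure_axioms
        lborel.sigma_finite_measure_axioms)
  define I where "I = (\<integral>z. \<bar>z \<bullet> u\<bar> * \<bar>z \<bullet> v\<bar> \<partial>(unif_sphere :: (real^'n) measure))"
  define F where "F z t = \<bar>(cos (t/2) * (z \<bullet> u) - sin (t/2) * (z \<bullet> v))
      * (sin (t/2) * (z \<bullet> u) + cos (t/2) * (z \<bullet> v))\<bar> * indicator {0..4*pi} t"
    for z :: "real^'n" and t :: real
  have norm_u_v: "norm u = 1" "norm v = 1"
    using uu vv by (simp_all add: norm_eq_sqrt_inner)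
  have square_le: "(z \<bullet> w)\<^sup>2 \<le> 1" if "norm z = 1" "norm w = 1" for z w :: "real^'n"
    using Cauchy_Schwarz_ineq2[of z w] that by (simp add: abs_square_le_1)
  have integrable_square: "integrable unif_sphere (\<lambda>z::real^'n. (z \<bullet> w)\<^sup>2)" if "norm w = 1" for w
    by (rule integrable_unif_sphere_bounded[where B=1]) (use square_le that in auto)
  have integral_F_sphere: "(\<integral>z. F z t \<partial>unif_sphere) = I * indicator {0..4*pi} t" for t
  proof -
    have "(\<integral>z. \<bar>plane_rotation u v (t/2) z \<bullet> u\<bar> * \<bar>plane_rotation u v (t/2) z \<bullet> v\<bar> \<partial>unif_sphere) = I"
      unfolding I_def
      by (rule integral_unif_sphere_orthogonal_transformation[OF
            orthogonal_transformation_plane_rotation[OF uu vv uv]]) simp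
    then show ?thesis
      by (simp add: F_def inner_plane_rotation_left[OF uu vv uv] abs_mult)
  qed
  have integral_F_line: "(\<integral>t. F z t \<partial>lborel) = 4 * ((z \<bullet> u)\<^sup>2 + (z \<bullet> v)\<^sup>2)" for z
  proof -
    have "(LBINT t=ereal 0..ereal (4*pi). \<bar>(cos (t/2) * (z \<bullet> u) - sin (t/2) * (z \<bullet> v))
        * (sin (t/2) * (z \<bullet> u) + cos (t/2) * (z \<bullet> v))\<bar>) = (\<integral>t. F z t \<partial>lborel)"
      by (subst interval_integral_Icc) (simp_all add: set_lebesgue_integral_def F_def[abs_def] mult.commute)
    then show ?thesis
      using interval_integral_abs_rotated_product[of "z \<bullet> u" "z \<bullet> v"] by (simp add: zero_ereal_def)
  qed
  have F_meas: "(\<lambda>(z, t). F z t) \<in> borel_measurable ((unif_sphere :: (real^'n) measure) \<Otimes>\<^sub>M lborel)"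
  proof -
    have "(\<lambda>(z, t). F z t) \<in> borel_measurable ((borel :: (real^'n) measure) \<Otimes>\<^sub>M lborel)"
      unfolding F_def by measurable
    then show ?thesis
      by (subst measurable_cong_sets[OF sets_pair_measure_cong[OF sets_unif_sphere refl] refl])
  qed
  have integrable_F: "integrable ((unif_sphere :: (real^'n) measure) \<Otimes>\<^sub>M lborel) (\<lambda>(z, t). F z t)"
  proof (rule Fubini_integrable[OF F_meas])
    have "F z t \<ge> 0" for z t
      by (simp add: F_def)
    then have "(\<lambda>z. \<integral>t. norm (F z t) \<partial>lborel) = (\<lambda>z. 4 * ((z \<bullet> u)\<^sup>2 + (z \<bullet> v)\<^sup>2))"
      by (simp add: integral_F_line)
    moreover have "integrable unif_sphere (\<lambda>z::real^'n. 4 * ((z \<bullet> u)\<^sup>2 + (z \<bullet> v)\<^sup>2))"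
      using integrable_square[OF norm_u_v(1)] integrable_square[OF norm_u_v(2)] by simp
    ultimately show "integrable unif_sphere (\<lambda>z. \<integral>t. norm (case (z, t) of (z, t) \<Rightarrow> F z t) \<partial>lborel)"
      by simp
    show "AE z in unif_sphere. integrable lborel (\<lambda>t. case (z, t) of (z, t) \<Rightarrow> F z t)"
      unfolding F_def
      by (intro AE_I2) (simp, intro borel_integrable_atLeastAtMost continuous_intros; simp)
  qed
  have "I * (4 * pi) = (\<integral>t. (\<integral>z. F z t \<partial>unif_sphere) \<partial>lborel)"
    by (simp add: integral_F_sphere)
  also have "\<dots> = (\<integral>z. (\<integral>t. F z t \<partial>lborel) \<partial>(unif_sphere :: (real^'n) measure))"
    using Fubini_integral[OF integrable_F] by simp
  also have "\<dots> = 4 * ((\<integral>z. (z \<bullet> u)\<^sup>2 \<partial>unif_sphere) + (\<integral>z. (z \<bullet> v)\<^sup>2 \<partial>(unif_sphere :: (real^'n) measure)))"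
    using integrable_square[OF norm_u_v(1)] integrable_square[OF norm_u_v(2)]
    by (simp add: integral_F_line)
  also have "\<dots> = 8 / real CARD('n)"
    using integral_unif_sphere_inner_square[OF norm_u_v(1)]
      integral_unif_sphere_inner_square[OF norm_u_v(2)] by simp
  finally show ?thesis
    unfolding I_def[symmetric] by (simp add: field_simps)
qed

section \<open>Gram-Schmidt orthonormalization and the estimator\<close>

definition gs_residual :: "(nat \<Rightarrow> 'a::real_inner) \<Rightarrow> nat \<Rightarrow> 'a" where
  "gs_residual w k = w k - (\<Sum>j<k. (w k \<bullet> gram_schmidt w j) *\<^sub>R gram_schmidt w j)"

lemma length_gs_list [simp]: "length (gs_list w k) = k"
  by (induction k) (simp_all add: Let_def)

lemma nth_gs_list: "j < k \<Longrightarrow> gs_list w k ! j = gram_schmidt w j"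
proof (induction k)
  case (Suc k)
  then show ?case
    using less_Suc_eq[of j k] by (auto simp: gram_schmidt_def Let_def nth_append)
qed simp

lemma gram_schmidt_eq_residual: "gram_schmidt w k = gs_residual w k /\<^sub>R norm (gs_residual w k)"
proof -
  have "(\<Sum>u\<leftarrow>gs_list w k. (w k \<bullet> u) *\<^sub>R u) = (\<Sum>j<k. (w k \<bullet> gram_schmidt w j) *\<^sub>R gram_schmidt w j)"
    by (simp add: sum_list_sum_nth atLeast0LessThan nth_gs_list)
  then show ?thesis
    by (simp add: gram_schmidt_def Let_def nth_append gs_residual_def)
qed

lemma gram_schmidt_eq_0_iff: "gram_schmidt w k = 0 \<longleftrightarrow> gs_residual w k = 0"
  by (simp add: gram_schmidt_eq_residual)

lemma norm_gram_schmidt: "norm (gram_schmidt w k) = (if gs_residual w k = 0 then 0 else 1)"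
  by (simp add: gram_schmidt_eq_residual)

lemma norm_gram_schmidt_le: "norm (gram_schmidt w k) \<le> 1"
  by (simp add: norm_gram_schmidt)

lemma gram_schmidt_cong:
  assumes "\<And>j. j \<le> k \<Longrightarrow> w j = w' j"
  shows "gram_schmidt w k = gram_schmidt w' k"
  using assms
proof (induction k rule: less_induct)
  case (less k)
  then have "gs_residual w k = gs_residual w' k"
    by (simp add: gs_residual_def)
  then show ?case by (simp add: gram_schmidt_eq_residual)
qed

lemma gram_schmidt_orthogonal_transformation:
  assumes f: "orthogonal_transformation f"
  shows "gram_schmidt (\<lambda>i. f (w i)) k = f (gram_schmidt w k)"
proof (induction k rule: less_induct)
  case (less k)
  have lin: "linear f"
    using f by (rule orthogonal_transformation_linear)
  have "gs_residual (\<lambda>i. f (w i)) k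
      = f (w k) - (\<Sum>j<k. (f (w k) \<bullet> f (gram_schmidt w j)) *\<^sub>R f (gram_schmidt w j))"
    using less by (simp add: gs_residual_def)
  also have "\<dots> = f (gs_residual w k)"
    using f by (simp add: gs_residual_def orthogonal_transformation_def linear_diff[OF lin]
        linear_sum[OF lin] linear_scale[OF lin])
  finally show ?case
    by (simp add: gram_schmidt_eq_residual orthogonal_transformation_norm[OF f] linear_scale[OF lin])
qed

lemma gram_schmidt_orthogonal:
  assumes "i \<noteq> j"
  shows "gram_schmidt w i \<bullet> gram_schmidt w j = 0"
proof -
  let ?e = "gram_schmidt w"
  have "\<forall>m<k. ?e m \<bullet> ?e k = 0" for k
  proof (induction k rule: less_induct)
    case (less k)
    show ?case
    proof (intro allI impI)
      fix m assume "m < k"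
      have "(\<Sum>j<k. (w k \<bullet> ?e j) * (?e m \<bullet> ?e j)) = (\<Sum>j\<in>{m}. (w k \<bullet> ?e j) * (?e m \<bullet> ?e j))"
      proof (rule sum.mono_neutral_right)
        show "\<forall>j\<in>{..<k} - {m}. (w k \<bullet> ?e j) * (?e m \<bullet> ?e j) = 0"
          using less.IH \<open>m < k\<close> by (metis Diff_iff inner_commute lessThan_iff linorder_neqE_nat
              mult_eq_0_iff singletonI)
      qed (use \<open>m < k\<close> in auto)
      moreover have "?e m \<bullet> w k = (w k \<bullet> ?e m) * (?e m \<bullet> ?e m)"
        by (cases "gs_residual w m = 0")
          (simp_all add: gram_schmidt_eq_0_iff[symmetric] inner_commute norm_eq_1[symmetric]
            norm_gram_schmidt)
      ultimately have "?e m \<bullet> gs_residual w k = 0"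
        by (simp add: gs_residual_def inner_diff_right inner_sum_right)
      then show "?e m \<bullet> ?e k = 0"
        by (simp add: gram_schmidt_eq_residual[of w k])
    qed
  qed
  with assms show ?thesis
    by (metis inner_commute linorder_neqE_nat)
qed

lemma borel_measurable_gram_schmidt:
  fixes W :: "nat \<Rightarrow> 's \<Rightarrow> 'a::euclidean_space"
  assumes "\<And>i. i \<le> k \<Longrightarrow> W i \<in> borel_measurable M"
  shows "(\<lambda>\<omega>. gram_schmidt (\<lambda>i. W i \<omega>) k) \<in> borel_measurable M"
  using assms
proof (induction k rule: less_induct)
  case (less k)
  then have "(\<lambda>\<omega>. gs_residual (\<lambda>i. W i \<omega>) k) \<in> borel_measurable M"
    unfolding gs_residual_def
    by (intro borel_measurable_diff borel_measurable_sum borel_measurable_scaleR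
        borel_measurable_inner) simp_all
  then show ?case
    unfolding gram_schmidt_eq_residual[of _ k] by measurable
qed

lemma gram_schmidt_restrict: "k < q \<Longrightarrow> gram_schmidt (restrict w {0..<q}) k = gram_schmidt w k"
  by (rule gram_schmidt_cong) simp

lemma vt_orthogonal_transformation:
  assumes f: "orthogonal_transformation f"
  shows "vt q (f g) (\<lambda>i. f (w i)) = f (vt q g w)"
  using f orthogonal_transformation_linear[OF f]
  by (simp add: vt_def gram_schmidt_orthogonal_transformation orthogonal_transformation_def
      linear_sum linear_scale)

lemma g2_est_orthogonal_transformation:
  assumes f: "orthogonal_transformation f"
  shows "g2_est d q (f g) (\<lambda>i. f (w i)) = f (g2_est d q g w)"
  using f orthogonal_transformation_linear[OF f]
  by (simp add: g2_est_def vt_orthogonal_transformation orthogonal_transformation_def linear_scale)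

lemma g2_est_restrict: "g2_est d q g (restrict w {0..<q}) = g2_est d q g w"
  by (simp add: g2_est_def vt_def gram_schmidt_restrict)

lemma inner_g2_est_self:
  "g \<bullet> g2_est d q g w = real d / ((2 / pi) * (real q - 1) + 1) / real q *
     (\<Sum>i<q. \<Sum>j<q. \<bar>g \<bullet> gram_schmidt w i\<bar> * \<bar>g \<bullet> gram_schmidt w j\<bar>)"
proof -
  have "sgn x * x = \<bar>x\<bar>" for x :: real
    by (simp add: abs_sgn mult.commute)
  then have "g \<bullet> vt q g w = (\<Sum>i<q. \<bar>g \<bullet> gram_schmidt w i\<bar>) / sqrt (real q)"
    by (simp add: vt_def inner_sum_right)
  then have "(g \<bullet> vt q g w)\<^sup>2 = (\<Sum>i<q. \<bar>g \<bullet> gram_schmidt w i\<bar>)\<^sup>2 / real q"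
    by (simp add: power_divide)
  also have "(\<Sum>i<q. \<bar>g \<bullet> gram_schmidt w i\<bar>)\<^sup>2
      = (\<Sum>i<q. \<Sum>j<q. \<bar>g \<bullet> gram_schmidt w i\<bar> * \<bar>g \<bullet> gram_schmidt w j\<bar>)"
    by (simp add: power2_eq_square sum_product)
  finally have square: "(g \<bullet> vt q g w)\<^sup>2
      = (\<Sum>i<q. \<Sum>j<q. \<bar>g \<bullet> gram_schmidt w i\<bar> * \<bar>g \<bullet> gram_schmidt w j\<bar>) / real q" .
  have "g \<bullet> g2_est d q g w = real d / ((2 / pi) * (real q - 1) + 1) * (g \<bullet> vt q g w)\<^sup>2"
    by (simp add: g2_est_def power2_eq_square)
  then show ?thesis
    by (simp add: square)
qed

lemma norm_vt_le: "norm (vt q g w) \<le> real q"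
proof -
  have "norm (sgn (g \<bullet> gram_schmidt w i) *\<^sub>R gram_schmidt w i) \<le> 1" for i
    using norm_gram_schmidt_le[of w i] by (simp add: abs_sgn_eq)
  then have "norm (\<Sum>i<q. sgn (g \<bullet> gram_schmidt w i) *\<^sub>R gram_schmidt w i) \<le> (\<Sum>i<q. (1::real))"
    by (intro order_trans[OF norm_sum sum_mono])
  moreover have "\<bar>1 / sqrt (real q)\<bar> \<le> 1"
    by (cases "q = 0") (simp_all add: divide_le_eq_1)
  ultimately show ?thesis
    unfolding vt_def using mult_mono[of "\<bar>1 / sqrt (real q)\<bar>" 1 _ "real q"] by simp
qed

lemma norm_g2_est_le:
  "norm (g2_est d q g w) \<le> \<bar>real d / ((2 / pi) * (real q - 1) + 1)\<bar> * norm g * (real q)\<^sup>2"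
proof -
  let ?c = "real d / ((2 / pi) * (real q - 1) + 1)"
  have "norm (g2_est d q g w) = \<bar>?c\<bar> * \<bar>g \<bullet> vt q g w\<bar> * norm (vt q g w)"
    by (simp add: g2_est_def abs_mult)
  also have "\<dots> \<le> \<bar>?c\<bar> * (norm g * norm (vt q g w)) * norm (vt q g w)"
    by (intro mult_right_mono mult_left_mono Cauchy_Schwarz_ineq2) simp_all
  also have "\<dots> \<le> \<bar>?c\<bar> * (norm g * real q) * real q"
    by (intro mult_mono mult_left_mono norm_vt_le) simp_all
  finally show ?thesis by (simp add: power2_eq_square mult.assoc)
qed

lemma borel_measurable_g2_est:
  fixes W :: "nat \<Rightarrow> 's \<Rightarrow> 'a::euclidean_space"
  assumes "\<And>i. i < q \<Longrightarrow> W i \<in> borel_measurable M"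
  shows "(\<lambda>\<omega>. g2_est d q g (\<lambda>i. W i \<omega>)) \<in> borel_measurable M"
proof -
  have "(\<lambda>\<omega>. gram_schmidt (\<lambda>i. W i \<omega>) j) \<in> borel_measurable M" if "j < q" for j
    using that assms by (intro borel_measurable_gram_schmidt) simp
  then have "(\<lambda>\<omega>. vt q g (\<lambda>i. W i \<omega>)) \<in> borel_measurable M"
    unfolding vt_def by measurable
  then show ?thesis
    unfolding g2_est_def by measurable
qed

lemma integral_unif_sphere_abs_inner_orthonormal:
  fixes a b :: "real^'n"
  assumes a: "norm a = 1" and b: "norm b = 1" and ab: "a \<noteq> b \<Longrightarrow> a \<bullet> b = 0"
  shows "(\<integral>y. \<bar>y \<bullet> a\<bar> * \<bar>y \<bullet> b\<bar> \<partial>unif_sphere)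
    = (if a = b then 1 / real CARD('n) else 2 / (pi * real CARD('n)))"
proof (cases "a = b")
  case True
  then show ?thesis
    using integral_unif_sphere_inner_square[OF a] by (simp add: power2_eq_square abs_mult_self_eq)
next
  case False
  then show ?thesis
    using a b ab by (simp add: integral_unif_sphere_abs_inner_mult norm_eq_1)
qed

section \<open>Independent uniform directions\<close>

lemma (in prob_space) AE_indep_var_not_in:
  assumes indep: "indep_var N X N' Y" and S: "S \<in> sets (N \<Otimes>\<^sub>M N')"
    and null: "\<And>x. x \<in> space N \<Longrightarrow> emeasure (distr M N' Y) (Pair x -` S) = 0"
  shows "AE \<omega> in M. (X \<omega>, Y \<omega>) \<notin> S"
proof -
  have X: "random_variable N X" and Y: "random_variable N' Y"
    and joint: "distr M N X \<Otimes>\<^sub>M distr M N' Y = distr M (N \<Otimes>\<^sub>M N') (\<lambda>\<omega>. (X \<omega>, Y \<omega>))"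
    using indep by (simp_all add: indep_var_distribution_eq)
  interpret Y: prob_space "distr M N' Y"
    by (rule prob_space_distr[OF Y])
  have "emeasure (distr M N X \<Otimes>\<^sub>M distr M N' Y) S
      = (\<integral>\<^sup>+x. emeasure (distr M N' Y) (Pair x -` S) \<partial>distr M N X)"
    using S by (intro Y.emeasure_pair_measure_alt) (simp cong: sets_pair_measure_cong)
  also have "\<dots> = (\<integral>\<^sup>+x. 0 \<partial>distr M N X)"
    by (rule nn_integral_cong) (simp add: null)
  finally have "emeasure (distr M (N \<Otimes>\<^sub>M N') (\<lambda>\<omega>. (X \<omega>, Y \<omega>))) S = 0"
    by (simp add: joint)
  moreover have XY: "(\<lambda>\<omega>. (X \<omega>, Y \<omega>)) \<in> M \<rightarrow>\<^sub>M N \<Otimes>\<^sub>M N'"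
    using X Y by (rule measurable_Pair)
  ultimately have "emeasure M ((\<lambda>\<omega>. (X \<omega>, Y \<omega>)) -` S \<inter> space M) = 0"
    using S by (simp add: emeasure_distr)
  moreover have "(\<lambda>\<omega>. (X \<omega>, Y \<omega>)) -` S \<inter> space M \<in> sets M"
    using XY S by (rule measurable_sets)
  ultimately show ?thesis
    by (intro AE_I'[of "(\<lambda>\<omega>. (X \<omega>, Y \<omega>)) -` S \<inter> space M"]) (auto intro: null_setsI)
qed

locale sphere_sample = prob_space M for M :: "'s measure" +
  fixes W :: "nat \<Rightarrow> 's \<Rightarrow> real^'n" and q :: nat
  assumes q_pos: "1 \<le> q" and q_le_dim: "q \<le> CARD('n)"
    and indep_W: "indep_vars (\<lambda>_. borel) W {0..<q}"
    and distr_W: "\<And>i. i < q \<Longrightarrow> distr M borel (W i) = unif_sphere"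
begin

abbreviation U :: "nat \<Rightarrow> 's \<Rightarrow> real^'n" where
  "U k \<omega> \<equiv> gram_schmidt (\<lambda>i. W i \<omega>) k"

lemma random_variable_W: "i < q \<Longrightarrow> W i \<in> borel_measurable M"
  using indep_W by (simp add: indep_vars_def)

lemma random_variable_U: "k < q \<Longrightarrow> U k \<in> borel_measurable M"
  by (intro borel_measurable_gram_schmidt random_variable_W) simp

lemma distr_orthogonal_sample:
  fixes f :: "real^'n \<Rightarrow> real^'n"
  assumes f: "orthogonal_transformation f"
  shows "distr M (PiM {0..<q} (\<lambda>_. borel)) (\<lambda>\<omega>. \<lambda>i\<in>{0..<q}. f (W i \<omega>))
    = PiM {0..<q} (\<lambda>_. unif_sphere)"
proof -
  have f_meas: "f \<in> borel_measurable borel"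
    using f by (rule borel_measurable_orthogonal_transformation)
  have rv: "(\<lambda>\<omega>. f (W i \<omega>)) \<in> borel_measurable M" if "i < q" for i
    using measurable_compose[OF random_variable_W[OF that] f_meas] by (simp add: comp_def)
  have distr_fW: "distr M borel (\<lambda>\<omega>. f (W i \<omega>)) = unif_sphere" if "i < q" for i
    using that random_variable_W[OF that] f_meas
    by (simp add: distr_distr[symmetric, unfolded comp_def] distr_W
        distr_unif_sphere_orthogonal_transformation[OF f])
  have "indep_vars (\<lambda>_. borel) (\<lambda>i \<omega>. f (W i \<omega>)) {0..<q}"
    by (rule indep_vars_compose2[OF indep_W]) (simp add: f_meas)
  then have "distr M (PiM {0..<q} (\<lambda>_. borel)) (\<lambda>\<omega>. \<lambda>i\<in>{0..<q}. f (W i \<omega>))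
      = PiM {0..<q} (\<lambda>i. distr M borel (\<lambda>\<omega>. f (W i \<omega>)))"
    using indep_vars_iff_distr_eq_PiM'[where I="{0..<q}" and M'="\<lambda>_. borel" and X="\<lambda>i \<omega>. f (W i \<omega>)"]
      q_pos rv
    by simp
  also have "\<dots> = PiM {0..<q} (\<lambda>_. unif_sphere)"
    by (rule PiM_cong) (simp_all add: distr_fW)
  finally show ?thesis .
qed

lemma integral_orthogonal_sample:
  fixes H :: "(nat \<Rightarrow> real^'n) \<Rightarrow> 'b::{banach, second_countable_topology}"
    and f :: "real^'n \<Rightarrow> real^'n"
  assumes f: "orthogonal_transformation f"
    and H_meas: "H \<in> borel_measurable (PiM {0..<q} (\<lambda>_. borel))"
    and H_restrict: "\<And>w. H (restrict w {0..<q}) = H w"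
  shows "(\<integral>\<omega>. H (\<lambda>i. f (W i \<omega>)) \<partial>M) = (\<integral>\<omega>. H (\<lambda>i. W i \<omega>) \<partial>M)"
proof -
  have sample_meas: "(\<lambda>\<omega>. \<lambda>i\<in>{0..<q}. h (W i \<omega>)) \<in> M \<rightarrow>\<^sub>M PiM {0..<q} (\<lambda>_. borel)"
    if "h \<in> borel_measurable borel" for h :: "real^'n \<Rightarrow> real^'n"
    using that random_variable_W by (intro measurable_restrict) simp
  have "(\<integral>\<omega>. H (\<lambda>i. f (W i \<omega>)) \<partial>M)
      = (\<integral>w. H w \<partial>distr M (PiM {0..<q} (\<lambda>_. borel)) (\<lambda>\<omega>. \<lambda>i\<in>{0..<q}. f (W i \<omega>)))"
    using integral_distr[OF sample_meas[OF borel_measurable_orthogonal_transformation[OF f]] H_meas]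
    by (simp add: H_restrict)
  also have "\<dots> = (\<integral>w. H w \<partial>distr M (PiM {0..<q} (\<lambda>_. borel)) (\<lambda>\<omega>. \<lambda>i\<in>{0..<q}. W i \<omega>))"
    using distr_orthogonal_sample[OF f] distr_orthogonal_sample[OF orthogonal_transformation_id]
    by simp
  also have "\<dots> = (\<integral>\<omega>. H (\<lambda>i. W i \<omega>) \<partial>M)"
    using integral_distr[OF sample_meas[of "\<lambda>x. x"] H_meas] by (simp add: H_restrict)
  finally show ?thesis .
qed

(* W k is independent of W 0, ..., W (k - 1), whose span has dimension at most k < d and is
  therefore null for unif_sphere. *)
lemma AE_gram_schmidt_nonzero:
  assumes k: "k < q"
  shows "AE \<omega> in M. U k \<omega> \<noteq> 0"
proof -
  let ?PA = "PiM {0..<k} (\<lambda>_. borel :: (real^'n) measure)"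
  let ?PB = "PiM {k} (\<lambda>_. borel :: (real^'n) measure)"
  define R where "R p = snd p k - (\<Sum>j<k. (snd p k \<bullet> gram_schmidt (fst p) j) *\<^sub>R gram_schmidt (fst p) j)"
    for p :: "(nat \<Rightarrow> real^'n) \<times> (nat \<Rightarrow> real^'n)"
  define S where "S = {p \<in> space (?PA \<Otimes>\<^sub>M ?PB). R p = 0}"
  have "R \<in> borel_measurable (?PA \<Otimes>\<^sub>M ?PB)"
  proof -
    have "(\<lambda>p. gram_schmidt (fst p) j) \<in> borel_measurable (?PA \<Otimes>\<^sub>M ?PB)" if "j < k" for j
      using that
      by (intro borel_measurable_gram_schmidt[where W="\<lambda>i p. fst p i"]
          measurable_compose[OF measurable_fst measurable_component_singleton]) simp
    moreover have "(\<lambda>p. snd p k) \<in> borel_measurable (?PA \<Otimes>\<^sub>M ?PB)"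
      by (intro measurable_compose[OF measurable_snd measurable_component_singleton]) simp
    ultimately show ?thesis
      unfolding R_def
      by (intro borel_measurable_diff borel_measurable_sum borel_measurable_scaleR
          borel_measurable_inner) simp_all
  qed
  then have S: "S \<in> sets (?PA \<Otimes>\<^sub>M ?PB)"
    unfolding S_def by measurable
  have indep: "indep_var ?PA (\<lambda>\<omega>. \<lambda>i\<in>{0..<k}. W i \<omega>) ?PB (\<lambda>\<omega>. \<lambda>i\<in>{k}. W i \<omega>)"
    using k by (intro indep_var_restrict[OF indep_W]) auto
  have "AE \<omega> in M. ((\<lambda>i\<in>{0..<k}. W i \<omega>), (\<lambda>i\<in>{k}. W i \<omega>)) \<notin> S"
  proof (rule AE_indep_var_not_in[OF indep S])
    fix x
    define T where "T = {v::real^'n. v - (\<Sum>j<k. (v \<bullet> gram_schmidt x j) *\<^sub>R gram_schmidt x j) = 0}"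
    have T: "T \<in> sets borel"
      unfolding T_def by measurable
    have "T \<subseteq> span (gram_schmidt x ` {..<k})"
    proof
      fix v assume "v \<in> T"
      then have "v = (\<Sum>j<k. (v \<bullet> gram_schmidt x j) *\<^sub>R gram_schmidt x j)"
        by (simp add: T_def)
      also have "\<dots> \<in> span (gram_schmidt x ` {..<k})"
        by (intro span_sum span_mul span_base) auto
      finally show "v \<in> span (gram_schmidt x ` {..<k})" .
    qed
    moreover have "dim (span (gram_schmidt x ` {..<k})) \<le> card (gram_schmidt x ` {..<k})"
      by (intro dim_le_card) auto
    moreover have "card (gram_schmidt x ` {..<k}) \<le> k"
      using card_image_le[of "{..<k}" "gram_schmidt x"] by simp
    ultimately have "emeasure unif_sphere T = 0"
      using k q_le_dim by (intro emeasure_unif_sphere_lowdim_subspace[OF T]) auto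
    have "(\<lambda>\<omega>. \<lambda>i\<in>{k}. W i \<omega>) \<in> M \<rightarrow>\<^sub>M ?PB"
      using indep by (simp add: indep_var_distribution_eq)
    then have "emeasure (distr M ?PB (\<lambda>\<omega>. \<lambda>i\<in>{k}. W i \<omega>)) (Pair x -` S)
        = emeasure M ((\<lambda>\<omega>. \<lambda>i\<in>{k}. W i \<omega>) -` (Pair x -` S) \<inter> space M)"
      using sets_Pair1[OF S] by (simp add: emeasure_distr)
    also have "\<dots> \<le> emeasure M (W k -` T \<inter> space M)"
      using random_variable_W[OF k] T
      by (intro emeasure_mono) (auto simp: S_def R_def T_def)
    also have "\<dots> = emeasure unif_sphere T"
      using random_variable_W[OF k] T by (simp add: emeasure_distr distr_W[OF k, symmetric])
    finally show "emeasure (distr M ?PB (\<lambda>\<omega>. \<lambda>i\<in>{k}. W i \<omega>)) (Pair x -` S) = 0"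
      using \<open>emeasure unif_sphere T = 0\<close> by simp
  qed
  then show ?thesis
  proof (rule AE_mp, intro AE_I2 impI)
    fix \<omega> assume \<omega>: "\<omega> \<in> space M" and not_in: "((\<lambda>i\<in>{0..<k}. W i \<omega>), (\<lambda>i\<in>{k}. W i \<omega>)) \<notin> S"
    have "gram_schmidt (\<lambda>i\<in>{0..<k}. W i \<omega>) j = U j \<omega>" if "j < k" for j
      using that by (intro gram_schmidt_cong) simp
    then have "R ((\<lambda>i\<in>{0..<k}. W i \<omega>), (\<lambda>i\<in>{k}. W i \<omega>)) = gs_residual (\<lambda>i. W i \<omega>) k"
      by (simp add: R_def gs_residual_def)
    moreover have "((\<lambda>i\<in>{0..<k}. W i \<omega>), (\<lambda>i\<in>{k}. W i \<omega>)) \<in> space (?PA \<Otimes>\<^sub>M ?PB)"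
      by (simp add: space_pair_measure space_PiM)
    ultimately show "U k \<omega> \<noteq> 0"
      using not_in by (simp add: S_def gram_schmidt_eq_0_iff)
  qed
qed

lemma AE_norm_gram_schmidt: "AE \<omega> in M. \<forall>k<q. norm (U k \<omega>) = 1"
proof -
  have "AE \<omega> in M. \<forall>k\<in>{..<q}. U k \<omega> \<noteq> 0"
    using AE_gram_schmidt_nonzero by (subst AE_finite_all) auto
  then show ?thesis
    by eventually_elim (auto simp: norm_gram_schmidt gram_schmidt_eq_0_iff)
qed

lemma integral_abs_inner_gram_schmidt_unit_invariant:
  assumes i: "i < q" and j: "j < q" and y: "norm y = 1" and z: "norm z = 1"
  shows "(\<integral>\<omega>. \<bar>y \<bullet> U i \<omega>\<bar> * \<bar>y \<bullet> U j \<omega>\<bar> \<partial>M) = (\<integral>\<omega>. \<bar>z \<bullet> U i \<omega>\<bar> * \<bar>z \<bullet> U j \<omega>\<bar> \<partial>M)"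
proof -
  obtain f where f: "orthogonal_transformation f" and "f z = y"
    using orthogonal_transformation_exists_1[OF z y] by blast
  define H where "H w = \<bar>y \<bullet> gram_schmidt w i\<bar> * \<bar>y \<bullet> gram_schmidt w j\<bar>" for w :: "nat \<Rightarrow> real^'n"
  have "H \<in> borel_measurable (PiM {0..<q} (\<lambda>_. borel))"
    unfolding H_def using i j
    by (intro borel_measurable_times borel_measurable_abs borel_measurable_inner
        borel_measurable_const borel_measurable_gram_schmidt measurable_component_singleton) auto
  moreover have "H (restrict w {0..<q}) = H w" for w
    using i j by (simp add: H_def gram_schmidt_restrict)
  ultimately have "(\<integral>\<omega>. H (\<lambda>l. f (W l \<omega>)) \<partial>M) = (\<integral>\<omega>. H (\<lambda>l. W l \<omega>) \<partial>M)"
    by (rule integral_orthogonal_sample[OF f])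
  moreover have "H (\<lambda>l. f (w l)) = \<bar>z \<bullet> gram_schmidt w i\<bar> * \<bar>z \<bullet> gram_schmidt w j\<bar>" for w
    using f \<open>f z = y\<close>
    by (auto simp: H_def gram_schmidt_orthogonal_transformation orthogonal_transformation_def)
  ultimately show ?thesis
    by (simp add: H_def)
qed

(* The left-hand side does not depend on the unit vector z, so it equals its mean over a uniform
  direction y; by Fubini this is the mean over omega of a sphere integral computed above. *)
lemma integral_abs_inner_gram_schmidt_unit:
  assumes i: "i < q" and j: "j < q" and z: "norm z = 1"
  shows "(\<integral>\<omega>. \<bar>z \<bullet> U i \<omega>\<bar> * \<bar>z \<bullet> U j \<omega>\<bar> \<partial>M)
    = (if i = j then 1 / real CARD('n) else 2 / (pi * real CARD('n)))" (is "?\<kappa> = ?c")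
proof -
  interpret S: prob_space "unif_sphere :: (real^'n) measure"
    by (rule prob_space_unif_sphere)
  interpret P: pair_prob_space M "unif_sphere :: (real^'n) measure"
    by unfold_locales
  define \<Phi> where "\<Phi> \<omega> y = \<bar>sgn y \<bullet> U i \<omega>\<bar> * \<bar>sgn y \<bullet> U j \<omega>\<bar>" for \<omega> and y :: "real^'n"
  have U_fst: "(\<lambda>p. U k (fst p)) \<in> borel_measurable (M \<Otimes>\<^sub>M (unif_sphere :: (real^'n) measure))"
    if "k < q" for k
    by (rule measurable_compose[OF measurable_fst random_variable_U[OF that]])
  have \<Phi>_meas: "(\<lambda>(\<omega>, y). \<Phi> \<omega> y) \<in> borel_measurable (M \<Otimes>\<^sub>M (unif_sphere :: (real^'n) measure))"
    unfolding \<Phi>_def split_beta' using U_fst[OF i] U_fst[OF j] by measurable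
  have \<Phi>_le: "\<bar>\<Phi> \<omega> y\<bar> \<le> 1" for \<omega> y
  proof -
    have "\<bar>sgn y \<bullet> U k \<omega>\<bar> \<le> 1" for k
    proof -
      have "\<bar>sgn y \<bullet> U k \<omega>\<bar> \<le> norm (sgn y) * norm (U k \<omega>)"
        by (rule Cauchy_Schwarz_ineq2)
      also have "\<dots> \<le> 1 * 1"
        by (intro mult_mono) (simp_all add: norm_sgn norm_gram_schmidt_le)
      finally show ?thesis by simp
    qed
    then show ?thesis
      unfolding \<Phi>_def by (simp add: mult_le_one)
  qed
  have "(\<integral>y. (\<integral>\<omega>. \<Phi> \<omega> y \<partial>M) \<partial>(unif_sphere :: (real^'n) measure))
      = (\<integral>\<omega>. (\<integral>y. \<Phi> \<omega> y \<partial>unif_sphere) \<partial>M)"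
    using \<Phi>_meas \<Phi>_le
    by (intro P.Fubini_integral P.P.integrable_const_bound[where B=1]) auto
  moreover have "(\<integral>y. (\<integral>\<omega>. \<Phi> \<omega> y \<partial>M) \<partial>(unif_sphere :: (real^'n) measure)) = ?\<kappa>"
  proof -
    have "(\<integral>y. (\<integral>\<omega>. \<Phi> \<omega> y \<partial>M) \<partial>(unif_sphere :: (real^'n) measure))
        = (\<integral>y. ?\<kappa> \<partial>(unif_sphere :: (real^'n) measure))"
    proof (rule integral_cong_AE)
      show "AE y in unif_sphere. (\<integral>\<omega>. \<Phi> \<omega> y \<partial>M) = ?\<kappa>"
        using AE_unif_sphere_norm
      proof eventually_elim
        fix y :: "real^'n" assume "norm y = 1"
        then show "(\<integral>\<omega>. \<Phi> \<omega> y \<partial>M) = ?\<kappa>"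
          using integral_abs_inner_gram_schmidt_unit_invariant[OF i j _ z]
          by (simp add: \<Phi>_def sgn_div_norm)
      qed
    qed (use \<Phi>_meas in simp_all)
    then show ?thesis
      using S.prob_space by simp
  qed
  moreover have "(\<integral>\<omega>. (\<integral>y. \<Phi> \<omega> y \<partial>unif_sphere) \<partial>M) = ?c"
  proof -
    have "(\<integral>\<omega>. (\<integral>y. \<Phi> \<omega> y \<partial>unif_sphere) \<partial>M) = (\<integral>\<omega>. ?c \<partial>M)"
    proof (rule integral_cong_AE)
      show "AE \<omega> in M. (\<integral>y. \<Phi> \<omega> y \<partial>unif_sphere) = ?c"
        using AE_norm_gram_schmidt
      proof eventually_elim
        fix \<omega> assume unit: "\<forall>k<q. norm (U k \<omega>) = 1"
        then have unit_ij: "norm (U i \<omega>) = 1" "norm (U j \<omega>) = 1"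
          using i j by simp_all
        have "(\<integral>y. \<Phi> \<omega> y \<partial>unif_sphere)
            = (\<integral>y. \<bar>y \<bullet> U i \<omega>\<bar> * \<bar>y \<bullet> U j \<omega>\<bar> \<partial>(unif_sphere :: (real^'n) measure))"
        proof (rule integral_cong_AE)
          show "AE y in unif_sphere. \<Phi> \<omega> y = \<bar>y \<bullet> U i \<omega>\<bar> * \<bar>y \<bullet> U j \<omega>\<bar>"
            using AE_unif_sphere_norm by eventually_elim (simp add: \<Phi>_def sgn_div_norm)
        qed (simp_all add: \<Phi>_def)
        also have "\<dots> = ?c"
        proof (cases "i = j")
          case True
          then show ?thesis
            using integral_unif_sphere_abs_inner_orthonormal[OF unit_ij] by simp
        next
          case False
          then have "U i \<omega> \<bullet> U j \<omega> = 0"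
            by (rule gram_schmidt_orthogonal)
          moreover from this have "U i \<omega> \<noteq> U j \<omega>"
            using unit_ij by (auto simp: norm_eq_1)
          ultimately show ?thesis
            using integral_unif_sphere_abs_inner_orthonormal[OF unit_ij] False by simp
        qed
        finally show "(\<integral>y. \<Phi> \<omega> y \<partial>unif_sphere) = ?c" .
      qed
    qed (use \<Phi>_meas in simp_all)
    then show ?thesis
      using prob_space by simp
  qed
  ultimately show ?thesis by simp
qed

lemma integral_abs_inner_gram_schmidt:
  assumes i: "i < q" and j: "j < q"
  shows "(\<integral>\<omega>. \<bar>g \<bullet> U i \<omega>\<bar> * \<bar>g \<bullet> U j \<omega>\<bar> \<partial>M)
    = (norm g)\<^sup>2 * (if i = j then 1 / real CARD('n) else 2 / (pi * real CARD('n)))"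
proof (cases "g = 0")
  case False
  then have "norm (sgn g) = 1"
    by (simp add: norm_sgn)
  moreover have "\<bar>g \<bullet> x\<bar> * \<bar>g \<bullet> y\<bar> = (norm g)\<^sup>2 * (\<bar>sgn g \<bullet> x\<bar> * \<bar>sgn g \<bullet> y\<bar>)" for x y
    using False by (simp add: sgn_div_norm abs_mult power2_eq_square field_simps)
  ultimately show ?thesis
    using integral_abs_inner_gram_schmidt_unit[OF i j] by simp
qed simp

lemma integrable_abs_inner_gram_schmidt:
  assumes i: "i < q" and j: "j < q"
  shows "integrable M (\<lambda>\<omega>. \<bar>g \<bullet> U i \<omega>\<bar> * \<bar>g \<bullet> U j \<omega>\<bar>)"
proof (rule integrable_const_bound[where B="norm g * norm g"])
  have "\<bar>g \<bullet> U k \<omega>\<bar> \<le> norm g" for k \<omega>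
  proof -
    have "\<bar>g \<bullet> U k \<omega>\<bar> \<le> norm g * norm (U k \<omega>)"
      by (rule Cauchy_Schwarz_ineq2)
    also have "\<dots> \<le> norm g * 1"
      by (intro mult_left_mono norm_gram_schmidt_le) simp
    finally show ?thesis by simp
  qed
  then show "AE \<omega> in M. norm (\<bar>g \<bullet> U i \<omega>\<bar> * \<bar>g \<bullet> U j \<omega>\<bar>) \<le> norm g * norm g"
    by (intro AE_I2) (simp add: abs_mult mult_mono)
qed (use random_variable_U[OF i] random_variable_U[OF j] in measurable)

lemma integrable_g2_est: "integrable M (\<lambda>\<omega>. g2_est d q g (\<lambda>i. W i \<omega>))"
  by (intro integrable_const_bound[where B="\<bar>real d / ((2 / pi) * (real q - 1) + 1)\<bar> * norm g * (real q)\<^sup>2"]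
      AE_I2 norm_g2_est_le borel_measurable_g2_est random_variable_W)

lemma inner_integral_g2_est:
  "g \<bullet> (\<integral>\<omega>. g2_est CARD('n) q g (\<lambda>i. W i \<omega>) \<partial>M) = (norm g)\<^sup>2"
proof -
  let ?d = "real CARD('n)" and ?c = "(2 / pi) * (real q - 1) + 1"
  have c_pos: "?c > 0"
    using q_pos by (simp add: add_nonneg_pos)
  have d_pos: "?d > 0"
    by simp
  have row: "(\<Sum>j<q. if i = j then 1 / ?d else 2 / (pi * ?d)) = ?c / ?d" if "i < q" for i
  proof -
    have "(\<Sum>j<q. if i = j then 1 / ?d else 2 / (pi * ?d))
        = (\<Sum>j<q. 2 / (pi * ?d) + (if i = j then 1 / ?d - 2 / (pi * ?d) else 0))"
      by (intro sum.cong) auto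
    also have "\<dots> = real q * (2 / (pi * ?d)) + (1 / ?d - 2 / (pi * ?d))"
      using that by (simp add: sum.distrib)
    also have "\<dots> = ?c / ?d"
      using d_pos by (simp add: field_simps)
    finally show ?thesis .
  qed
  have integral_sum_sum: "(\<integral>\<omega>. (\<Sum>i<q. \<Sum>j<q. \<bar>g \<bullet> U i \<omega>\<bar> * \<bar>g \<bullet> U j \<omega>\<bar>) \<partial>M)
      = (\<Sum>i<q. \<Sum>j<q. \<integral>\<omega>. \<bar>g \<bullet> U i \<omega>\<bar> * \<bar>g \<bullet> U j \<omega>\<bar> \<partial>M)"
  proof (subst Bochner_Integration.integral_sum)
    show "integrable M (\<lambda>\<omega>. \<Sum>j<q. \<bar>g \<bullet> U i \<omega>\<bar> * \<bar>g \<bullet> U j \<omega>\<bar>)" if "i \<in> {..<q}" for i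
      using that by (auto intro!: Bochner_Integration.integrable_sum integrable_abs_inner_gram_schmidt)
  qed (auto intro!: sum.cong Bochner_Integration.integral_sum integrable_abs_inner_gram_schmidt)
  have "g \<bullet> (\<integral>\<omega>. g2_est CARD('n) q g (\<lambda>i. W i \<omega>) \<partial>M)
      = (\<integral>\<omega>. g \<bullet> g2_est CARD('n) q g (\<lambda>i. W i \<omega>) \<partial>M)"
    using integrable_g2_est by (rule integral_inner_right[symmetric])
  also have "\<dots> = ?d / ?c / real q * (\<Sum>i<q. \<Sum>j<q. \<integral>\<omega>. \<bar>g \<bullet> U i \<omega>\<bar> * \<bar>g \<bullet> U j \<omega>\<bar> \<partial>M)"
    by (simp add: inner_g2_est_self integral_sum_sum)
  also have "\<dots> = ?d / ?c / real q * (\<Sum>i<q. (norm g)\<^sup>2 * (?c / ?d))"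
    by (simp add: integral_abs_inner_gram_schmidt row flip: sum_distrib_left)
  also have "\<dots> = (norm g)\<^sup>2"
    using c_pos q_pos by simp
  finally show ?thesis .
qed

lemma orthogonal_transformation_integral_g2_est:
  assumes f: "orthogonal_transformation f" and "f g = g"
  shows "f (\<integral>\<omega>. g2_est d q g (\<lambda>i. W i \<omega>) \<partial>M) = (\<integral>\<omega>. g2_est d q g (\<lambda>i. W i \<omega>) \<partial>M)"
proof -
  have "bounded_linear f"
    using orthogonal_transformation_linear[OF f] by (simp add: linear_conv_bounded_linear)
  then have "f (\<integral>\<omega>. g2_est d q g (\<lambda>i. W i \<omega>) \<partial>M) = (\<integral>\<omega>. f (g2_est d q g (\<lambda>i. W i \<omega>)) \<partial>M)"
    using integrable_g2_est by (rule integral_bounded_linear[symmetric])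
  also have "\<dots> = (\<integral>\<omega>. g2_est d q g (\<lambda>i. f (W i \<omega>)) \<partial>M)"
    using g2_est_orthogonal_transformation[OF f, of d q g] \<open>f g = g\<close> by simp
  also have "\<dots> = (\<integral>\<omega>. g2_est d q g (\<lambda>i. W i \<omega>) \<partial>M)"
  proof (rule integral_orthogonal_sample[where H="g2_est d q g", OF f _ g2_est_restrict])
    show "g2_est d q g \<in> borel_measurable (PiM {0..<q} (\<lambda>_. borel))"
      by (rule borel_measurable_g2_est[where W="\<lambda>i w. w i"]) (simp add: measurable_component_singleton)
  qed
  finally show ?thesis .
qed

end

definition reflection :: "'a::real_inner \<Rightarrow> 'a \<Rightarrow> 'a" where
  "reflection h x = x - (2 / (h \<bullet> h) * (x \<bullet> h)) *\<^sub>R h"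

lemma orthogonal_transformation_reflection: "orthogonal_transformation (reflection h)"
  unfolding orthogonal_transformation_def
proof (intro conjI allI)
  define c where "c = 2 / (h \<bullet> h)"
  show "linear (reflection h)"
    by (rule linearI)
      (simp_all add: reflection_def c_def[symmetric] inner_add_left distrib_left scaleR_add_left
        scaleR_diff_right)
  fix x y :: 'a
  have "c * c * (h \<bullet> h) = 2 * c"
    by (cases "h = 0") (simp_all add: c_def)
  moreover have "h \<bullet> y = y \<bullet> h" "h \<bullet> x = x \<bullet> h"
    by (simp_all add: inner_commute)
  ultimately show "reflection h x \<bullet> reflection h y = x \<bullet> y"
    unfolding reflection_def c_def[symmetric] inner_diff_left inner_diff_right
      inner_scaleR_left inner_scaleR_right
    by algebra
qed

lemma eq_scaleR_if_orthogonal_to_complement: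
  fixes g m :: "'a::real_inner"
  assumes g: "g \<noteq> 0" and orth: "\<And>h. h \<bullet> g = 0 \<Longrightarrow> m \<bullet> h = 0"
  shows "m = ((m \<bullet> g) / (g \<bullet> g)) *\<^sub>R g"
proof -
  define h where "h = m - ((m \<bullet> g) / (g \<bullet> g)) *\<^sub>R g"
  have "h \<bullet> g = 0"
    using g by (simp add: h_def inner_diff_left)
  then have "h \<bullet> h = 0"
    using orth[of h] by (simp add: h_def inner_diff_left inner_diff_right inner_commute)
  then show ?thesis
    by (simp add: h_def)
qed

context sphere_sample
begin

lemma has_bochner_integral_g2_est:
  assumes "g \<noteq> 0"
  shows "has_bochner_integral M (\<lambda>\<omega>. g2_est CARD('n) q g (\<lambda>i. W i \<omega>)) g"
proof -
  define m where "m = (\<integral>\<omega>. g2_est CARD('n) q g (\<lambda>i. W i \<omega>) \<partial>M)"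
  have "m \<bullet> h = 0" if "h \<bullet> g = 0" for h
  proof -
    have "reflection h g = g"
      using that by (simp add: reflection_def inner_commute)
    then have "reflection h m = m"
      unfolding m_def by (rule orthogonal_transformation_integral_g2_est[OF orthogonal_transformation_reflection])
    then show ?thesis
      by (auto simp: reflection_def)
  qed
  then have "m = ((m \<bullet> g) / (g \<bullet> g)) *\<^sub>R g"
    by (rule eq_scaleR_if_orthogonal_to_complement[OF assms])
  also have "m \<bullet> g = g \<bullet> g"
    using inner_integral_g2_est by (simp add: m_def inner_commute power2_norm_eq_inner)
  finally have "m = g"
    using assms by simp
  then show ?thesis
    using integrable_g2_est unfolding m_def by (metis has_bochner_integral_integrable)
qed

end

theorem mainTheorem3:
  fixes M :: "'s measure" and W :: "nat \<Rightarrow> 's \<Rightarrow> real ^ 'n"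
    and g :: "real ^ 'n" and q :: nat
  assumes "prob_space M"
    and "1 \<le> q" and "q \<le> CARD('n)"
    and "g \<noteq> 0"
    and "prob_space.indep_vars M (\<lambda>_. borel) W {0..<q}"
    and "\<And>i. i < q \<Longrightarrow> distr M borel (W i) = unif_sphere"
  shows "has_bochner_integral M (\<lambda>\<omega>. g2_est CARD('n) q g (\<lambda>i. W i \<omega>)) g"
proof -
  interpret sphere_sample M W q
    using assms by (simp add: sphere_sample_def sphere_sample_axioms_def)
  show ?thesis
    using \<open>g \<noteq> 0\<close> by (rule has_bochner_integral_g2_est)
qed

end
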